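(* Let $A,B$ be closed linear relations in $X^2$ such that $\{A,B\}$ is a dual pair with $B^*(0)\cap N(A^* )=\{0\}$ and $A^*(0)\cap N(B^* )=\{0\}$. Then $\dim N(1+B^*A^* )=\dim N(1+A^*B^* )$.
   Context: $X$ is a complex Hilbert space; linear relations are linear subspaces of $X^2=X\times X$. $T^*=\{(f,g):\langle g,x\rangle=\langle f,y\rangle\ \forall(x,y)\in T\}$; $T(0)=\{y:(0,y)\in T\}$; $N(T)=\{x:(x,0)\in T\}$. Closed relations $A,B$ form a dual pair if $A\subset B^*$ (equivalently $B\subset A^*$). Product: $CT=\{(x,z):\exists y,(x,y)\in T,(y,z)\in C\}$; $N(1+B^*A^* )=\{g:(g,-g)\in B^*A^*\}$, and similarly $N(1+A^*B^* )$. *)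

theory Defs
  imports "HOL-Analysis.Analysis" "HOL-Library.Equipollence"
begin

class complex_hilbert = real_normed_vector + complete_space +
  fixes scaleC :: "complex \<Rightarrow> 'a \<Rightarrow> 'a"
    and cinner :: "'a \<Rightarrow> 'a \<Rightarrow> complex"
  assumes scaleC_scaleR: "scaleC (complex_of_real r) x = scaleR r x"
    and scaleC_add_right: "scaleC a (x + y) = scaleC a x + scaleC a y"
    and scaleC_add_left: "scaleC (a + b) x = scaleC a x + scaleC b x"
    and scaleC_scaleC: "scaleC a (scaleC b x) = scaleC (a * b) x"
    and scaleC_one: "scaleC 1 x = x"
    and cinner_add_left: "cinner (x + y) z = cinner x z + cinner y z"
    and cinner_scaleC_left: "cinner (scaleC a x) y = cnj a * cinner x y"
    and cinner_commute: "cinner x y = cnj (cinner y x)"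
    and cinner_norm: "cinner x x = complex_of_real ((norm x)\<^sup>2)"

definition linear_relation :: "('a::complex_hilbert \<times> 'a) set \<Rightarrow> bool" where
  "linear_relation T \<longleftrightarrow> (0, 0) \<in> T \<and>
     (\<forall>p\<in>T. \<forall>q\<in>T. p + q \<in> T) \<and>
     (\<forall>c. \<forall>(x, y)\<in>T. (scaleC c x, scaleC c y) \<in> T)"

definition closed_linear_relation :: "('a::complex_hilbert \<times> 'a) set \<Rightarrow> bool" where
  "closed_linear_relation T \<longleftrightarrow> linear_relation T \<and> closed T"

definition adjoint_rel :: "('a::complex_hilbert \<times> 'a) set \<Rightarrow> ('a \<times> 'a) set" where
  "adjoint_rel T = {(f, g). \<forall>(x, y)\<in>T. cinner g x = cinner f y}"

definition mul_part :: "('a \<times> 'a) set \<Rightarrow> 'a::zero set" where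
  "mul_part T = {y. (0, y) \<in> T}"

definition rel_kernel :: "('a \<times> 'a::zero) set \<Rightarrow> 'a set" where
  "rel_kernel T = {x. (x, 0) \<in> T}"

definition rel_prod :: "('a \<times> 'a) set \<Rightarrow> ('a \<times> 'a) set \<Rightarrow> ('a \<times> 'a) set" where
  "rel_prod C T = {(x, z). \<exists>y. (x, y) \<in> T \<and> (y, z) \<in> C}"

definition one_plus :: "('a::plus \<times> 'a) set \<Rightarrow> ('a \<times> 'a) set" where
  "one_plus T = {(x, x + y) | x y. (x, y) \<in> T}"

definition dual_pair :: "('a::complex_hilbert \<times> 'a) set \<Rightarrow> ('a \<times> 'a) set \<Rightarrow> bool" where
  "dual_pair A B \<longleftrightarrow> closed_linear_relation A \<and> closed_linear_relation B \<and> A \<subseteq> adjoint_rel B"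

definition hamel_basis :: "'a::complex_hilbert set \<Rightarrow> 'a set \<Rightarrow> bool" where
  "hamel_basis M b \<longleftrightarrow> b \<subseteq> M \<and> \<not> module.dependent scaleC b \<and> module.span scaleC b = M"

definition same_dim :: "'a::complex_hilbert set \<Rightarrow> 'a set \<Rightarrow> bool" where
  "same_dim M N \<longleftrightarrow> (\<exists>b1 b2. hamel_basis M b1 \<and> hamel_basis N b2 \<and> b1 \<approx> b2)"

end

theory Submission
  imports Defs
begin

text \<open>A vector \<open>x\<close> lies in \<open>N(1 + TS)\<close> iff \<open>(x, h) \<in> S\<close> and \<open>(h, -x) \<in> T\<close> for some \<open>h\<close>,
  and then \<open>-h \<in> N(1 + ST)\<close>, witnessed by \<open>x\<close>. Two witnesses \<open>h\<close> differ by an element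
  of \<open>S(0) \<inter> N(T) = {0}\<close>, so a linear selection \<open>x \<mapsto> -h\<close> maps \<open>N(1 + TS)\<close> onto
  \<open>N(1 + ST)\<close>; it is injective because \<open>h = 0\<close> forces \<open>x \<in> T(0) \<inter> N(S) = {0}\<close>.
  A linear bijection carries a Hamel basis to an equipollent Hamel basis.\<close>

global_interpretation cvs: vector_space "scaleC :: complex \<Rightarrow> 'a::complex_hilbert \<Rightarrow> 'a"
  by unfold_locales (simp_all add: scaleC_add_right scaleC_add_left scaleC_scaleC scaleC_one)

global_interpretation cvs_pair:
  vector_space_pair "scaleC :: complex \<Rightarrow> 'a::complex_hilbert \<Rightarrow> 'a"
    "scaleC :: complex \<Rightarrow> 'a \<Rightarrow> 'a"
  by unfold_locales

lemma scaleC_minus_right: "scaleC c (- x) = - scaleC c (x::'a::complex_hilbert)"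
  using cvs.scale_right_diff_distrib[of c 0 x] by simp

lemma scaleC_minus_one: "scaleC (-1) (x::'a::complex_hilbert) = - x"
  using scaleC_scaleR[of "-1" x] by simp

lemma linear_relation_zero: "linear_relation T \<Longrightarrow> (0, 0) \<in> T"
  by (simp add: linear_relation_def)

lemma linear_relation_add:
  "linear_relation T \<Longrightarrow> (x, y) \<in> T \<Longrightarrow> (x', y') \<in> T \<Longrightarrow> (x + x', y + y') \<in> T"
  unfolding linear_relation_def by (metis add_Pair)

lemma linear_relation_scaleC:
  "linear_relation T \<Longrightarrow> (x, y) \<in> T \<Longrightarrow> (scaleC c x, scaleC c y) \<in> T"
  unfolding linear_relation_def by blast

lemma linear_relation_uminus:
  "linear_relation T \<Longrightarrow> (x, y) \<in> T \<Longrightarrow> (- x, - y) \<in> T"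
  using linear_relation_scaleC[of T x y "-1"] by (simp add: scaleC_minus_one)

lemma linear_relation_diff:
  "linear_relation T \<Longrightarrow> (x, y) \<in> T \<Longrightarrow> (x', y') \<in> T \<Longrightarrow> (x - x', y - y') \<in> T"
  using linear_relation_add[of T x y "- x'" "- y'"] linear_relation_uminus[of T x' y'] by simp

lemma cinner_zero_left: "cinner (0::'a::complex_hilbert) y = 0"
  using cinner_add_left[of "0::'a" 0 y] by simp

lemma linear_relation_adjoint_rel: "linear_relation (adjoint_rel T)"
  unfolding linear_relation_def adjoint_rel_def
  by (auto simp: cinner_zero_left cinner_add_left cinner_scaleC_left split: prod.splits)

lemma rel_kernel_one_plus_rel_prod_iff:
  "(x::'a::ab_group_add) \<in> rel_kernel (one_plus (rel_prod C T)) \<longleftrightarrow>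
     (\<exists>h. (x, h) \<in> T \<and> (h, - x) \<in> C)"
proof -
  have "(x, 0) \<in> one_plus R \<longleftrightarrow> (x, - x) \<in> R" for R :: "('a \<times> 'a) set"
    unfolding one_plus_def by (auto simp: add_eq_0_iff)
  then show ?thesis unfolding rel_kernel_def rel_prod_def by simp
qed

lemma subspace_Domain:
  "linear_relation R \<Longrightarrow> cvs.subspace (Domain R)"
  by (rule cvs.subspaceI) (force dest: linear_relation_zero linear_relation_add linear_relation_scaleC)+

lemma linear_relation_linear_selection:
  fixes R :: "('a::complex_hilbert \<times> 'a) set"
  assumes R: "linear_relation R" and M: "cvs.subspace M" "M \<subseteq> Domain R"
  obtains f where "Vector_Spaces.linear scaleC scaleC f" "\<And>x. x \<in> M \<Longrightarrow> (x, f x) \<in> R"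
proof -
  obtain b where b: "b \<subseteq> M" "cvs.independent b" "M \<subseteq> cvs.span b"
    by (rule cvs.basis_exists)
  define f where "f = cvs_pair.construct b (\<lambda>x. SOME y. (x, y) \<in> R)"
  have lin: "Vector_Spaces.linear scaleC scaleC f"
    unfolding f_def by (rule cvs_pair.linear_construct[OF b(2)])
  interpret f: Vector_Spaces.linear "scaleC :: complex \<Rightarrow> 'a \<Rightarrow> 'a" "scaleC :: complex \<Rightarrow> 'a \<Rightarrow> 'a" f
    by (rule lin)
  have "(x, f x) \<in> R" if "x \<in> cvs.span b" for x
    using that
  proof (induction rule: cvs.span_induct)
    case base
    show ?case
      by (rule cvs.subspaceI)
        (auto simp: f.add f.scale intro: linear_relation_zero[OF R]
          linear_relation_add[OF R] linear_relation_scaleC[OF R])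
  next
    case (step x)
    then have "\<exists>y. (x, y) \<in> R" using b(1) M(2) by blast
    then show ?case
      using cvs_pair.construct_basis[OF b(2) step] someI_ex by (simp add: f_def)
  qed
  with b(3) that lin show thesis by blast
qed

lemma same_dim_linear_image:
  fixes f :: "'a::complex_hilbert \<Rightarrow> 'a"
  assumes f: "Vector_Spaces.linear scaleC scaleC f"
    and M: "cvs.subspace M" and inj: "inj_on f M"
  shows "same_dim M (f ` M)"
proof -
  interpret f: Vector_Spaces.linear "scaleC :: complex \<Rightarrow> 'a \<Rightarrow> 'a" "scaleC :: complex \<Rightarrow> 'a \<Rightarrow> 'a" f
    by (rule f)
  obtain b where b: "b \<subseteq> M" "cvs.independent b" "M \<subseteq> cvs.span b"
    by (rule cvs.basis_exists)
  have span_b: "cvs.span b = M" using cvs.span_subspace[OF b(1) b(3) M] .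
  have "hamel_basis M b" unfolding hamel_basis_def using b span_b by simp
  moreover have "hamel_basis (f ` M) (f ` b)"
    unfolding hamel_basis_def
    using b(1) f.independent_injective_image[OF b(2)] inj f.span_image[of b] span_b by auto
  moreover have "b \<approx> f ` b"
    using inj_on_image_eqpoll_self[OF inj_on_subset[OF inj b(1)]] eqpoll_sym by blast
  ultimately show ?thesis unfolding same_dim_def by blast
qed

text \<open>The relation \<open>x \<mapsto> -h\<close> for the witnesses \<open>h\<close> of \<open>x \<in> N(1 + TS)\<close>.\<close>

lemma linear_relation_kernel_witnesses:
  fixes S T :: "('a::complex_hilbert \<times> 'a) set"
  assumes S: "linear_relation S" and T: "linear_relation T"
  shows "linear_relation {(x, y). (x, - y) \<in> S \<and> (- y, - x) \<in> T}"
  unfolding linear_relation_def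
proof (intro conjI ballI allI)
  show "(0, 0) \<in> {(x, y). (x, - y) \<in> S \<and> (- y, - x) \<in> T}"
    by (simp add: linear_relation_zero[OF S] linear_relation_zero[OF T])
next
  fix p q assume "p \<in> {(x, y). (x, - y) \<in> S \<and> (- y, - x) \<in> T}"
    and "q \<in> {(x, y). (x, - y) \<in> S \<and> (- y, - x) \<in> T}"
  then obtain x y x' y' where "p = (x, y)" "q = (x', y')"
    "(x, - y) \<in> S" "(- y, - x) \<in> T" "(x', - y') \<in> S" "(- y', - x') \<in> T"
    by auto
  then show "p + q \<in> {(x, y). (x, - y) \<in> S \<and> (- y, - x) \<in> T}"
    using linear_relation_add[OF S, of x "- y" x' "- y'"]
      linear_relation_add[OF T, of "- y" "- x" "- y'" "- x'"]
    by (simp add: add.commute)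
next
  fix c :: complex and p assume "p \<in> {(x, y). (x, - y) \<in> S \<and> (- y, - x) \<in> T}"
  then obtain x y where "p = (x, y)" "(x, - y) \<in> S" "(- y, - x) \<in> T" by auto
  then show "case p of (x, y) \<Rightarrow>
      (scaleC c x, scaleC c y) \<in> {(x, y). (x, - y) \<in> S \<and> (- y, - x) \<in> T}"
    using linear_relation_scaleC[OF S, of x "- y" c] linear_relation_scaleC[OF T, of "- y" "- x" c]
    by (simp add: scaleC_minus_right)
qed

lemma rel_kernel_one_plus_rel_prod_eq_Domain:
  "rel_kernel (one_plus (rel_prod T S)) =
     Domain {(x::'a::ab_group_add, y). (x, - y) \<in> S \<and> (- y, - x) \<in> T}"
proof (rule set_eqI)
  fix x :: 'a
  have "(\<exists>h. (x, h) \<in> S \<and> (h, - x) \<in> T) \<longleftrightarrow> (\<exists>y. (x, - y) \<in> S \<and> (- y, - x) \<in> T)"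
    by (metis minus_minus)
  then show "x \<in> rel_kernel (one_plus (rel_prod T S)) \<longleftrightarrow>
      x \<in> Domain {(x, y). (x, - y) \<in> S \<and> (- y, - x) \<in> T}"
    by (simp add: rel_kernel_one_plus_rel_prod_iff)
qed

lemma same_dim_rel_kernel_one_plus_rel_prod:
  fixes S T :: "('a::complex_hilbert \<times> 'a) set"
  assumes S: "linear_relation S" and T: "linear_relation T"
    and inj_cond: "mul_part T \<inter> rel_kernel S = {0}"
    and unique_cond: "mul_part S \<inter> rel_kernel T = {0}"
  shows "same_dim (rel_kernel (one_plus (rel_prod T S))) (rel_kernel (one_plus (rel_prod S T)))"
proof -
  define N1 where "N1 = rel_kernel (one_plus (rel_prod T S))"
  define N2 where "N2 = rel_kernel (one_plus (rel_prod S T))"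
  define R where "R = {(x, y). (x, - y) \<in> S \<and> (- y, - x) \<in> T}"
  have R: "linear_relation R"
    unfolding R_def by (rule linear_relation_kernel_witnesses[OF S T])
  have N1_eq: "N1 = Domain R"
    unfolding N1_def R_def by (rule rel_kernel_one_plus_rel_prod_eq_Domain)
  have N1_subspace: "cvs.subspace N1"
    unfolding N1_eq by (rule subspace_Domain[OF R])
  obtain f where f: "Vector_Spaces.linear scaleC scaleC f"
    and graph: "\<And>x. x \<in> N1 \<Longrightarrow> (x, f x) \<in> R"
    unfolding N1_eq by (blast intro: linear_relation_linear_selection[OF R subspace_Domain[OF R] subset_refl])
  interpret f: Vector_Spaces.linear "scaleC :: complex \<Rightarrow> 'a \<Rightarrow> 'a" "scaleC :: complex \<Rightarrow> 'a \<Rightarrow> 'a" f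
    by (rule f)
  have graph_S: "(x, - f x) \<in> S" and graph_T: "(f x, x) \<in> T" if "x \<in> N1" for x
    using graph[OF that] linear_relation_uminus[OF T, of "- f x" "- x"] by (auto simp: R_def)
  have "f x \<in> N2" if "x \<in> N1" for x
    unfolding N2_def rel_kernel_one_plus_rel_prod_iff using graph_S[OF that] graph_T[OF that] by blast
  moreover have "h \<in> f ` N1" if "h \<in> N2" for h
  proof -
    obtain g where g: "(h, g) \<in> T" "(g, - h) \<in> S"
      using \<open>h \<in> N2\<close> unfolding N2_def rel_kernel_one_plus_rel_prod_iff by blast
    have "g \<in> N1"
      using g linear_relation_uminus[OF T g(1)] unfolding N1_def rel_kernel_one_plus_rel_prod_iff by blast
    have "(0, f g - h) \<in> S"
      using linear_relation_diff[OF S g(2) graph_S[OF \<open>g \<in> N1\<close>]] by simp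
    moreover have "(f g - h, 0) \<in> T"
      using linear_relation_diff[OF T graph_T[OF \<open>g \<in> N1\<close>] g(1)] by simp
    ultimately have "f g - h \<in> mul_part S \<inter> rel_kernel T"
      unfolding mul_part_def rel_kernel_def by blast
    then have "h = f g" using unique_cond by simp
    with \<open>g \<in> N1\<close> show ?thesis by blast
  qed
  ultimately have "f ` N1 = N2" by blast
  moreover have "inj_on f N1"
  proof (rule f.inj_on_iff_eq_0[OF N1_subspace, THEN iffD2], intro ballI impI)
    fix x assume "x \<in> N1" "f x = 0"
    then have "(x, 0) \<in> S" "(0, x) \<in> T" using graph_S graph_T by fastforce+
    then have "x \<in> mul_part T \<inter> rel_kernel S" unfolding mul_part_def rel_kernel_def by blast
    then show "x = 0" using inj_cond by simp
  qed
  ultimately show ?thesis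
    unfolding N2_def[symmetric] N1_def[symmetric] using same_dim_linear_image[OF f N1_subspace] by blast
qed

theorem lemma2p4:
  fixes A B :: "('a::complex_hilbert \<times> 'a) set"
  assumes "closed_linear_relation A" and "closed_linear_relation B"
    and "dual_pair A B"
    and "mul_part (adjoint_rel B) \<inter> rel_kernel (adjoint_rel A) = {0}"
    and "mul_part (adjoint_rel A) \<inter> rel_kernel (adjoint_rel B) = {0}"
  shows "same_dim (rel_kernel (one_plus (rel_prod (adjoint_rel B) (adjoint_rel A))))
                  (rel_kernel (one_plus (rel_prod (adjoint_rel A) (adjoint_rel B))))"
  using same_dim_rel_kernel_one_plus_rel_prod[OF linear_relation_adjoint_rel
      linear_relation_adjoint_rel assms(4,5)] .

end
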